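(* Let $g_1:L_s\to[0,1]$ and $g_2:L_r\to[0,1]$ (with $s,r\ge2$ integers) be continuous encodings of $[0,1]$ with zero redundancy, and write $\Delta^{g_1}_{\alpha_1\alpha_2\dots}=g_1((\alpha_n))$, $\Delta^{g_2}_{\beta_1\beta_2\dots}=g_2((\beta_n))$. For each $n\ge1$ let $\varphi_n:A_s^n\to A_r$ be a function, and consider the rule $$\psi\big(x=\Delta^{g_1}_{\alpha_1\alpha_2\dots\alpha_n\dots}\big)=\Delta^{g_2}_{\beta_1\beta_2\dots\beta_n\dots},\qquad \beta_n=\varphi_n(\alpha_1,\dots,\alpha_n).$$ Then $\psi$ is (defined and) continuous at every point of $[0,1]$ if and only if $\psi$ is well defined at every $g_1$-binary point, i.e. for every $g_1$-binary point $x$ the two $g_1$-codes of $x$ yield the same value of the right-hand side.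
   Context: $A_s=\{0,1,\dots,s-1\}$ and $L_s=A_s\times A_s\times\cdots$ is the space of sequences over $A_s$ (similarly $A_r$, $L_r$). An encoding of $[0,1]$ with alphabet $A_s$ is a surjective map $g:L_s\to[0,1]$; if $g((\alpha_n))=x$, $(\alpha_n)$ is a $g$-code of $x$. The $g$-cylinder of rank $m$ with base $c_1\dots c_m$ is $\Delta^g_{c_1\dots c_m}=\{g((c_1,\dots,c_m,\alpha_1,\alpha_2,\dots)):(\alpha_n)\in L_s\}$. The encoding has zero redundancy if every point has at most two $g$-codes and the set of points with two $g$-codes is at most countable; points with two codes are $g$-binary, points with one code are $g$-unary. The encoding is continuous if every $g$-cylinder is an interval and any two distinct cylinders of the same rank have no common interior points. *)

theory Defs
  imports "HOL-Analysis.Analysis"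
begin

text \<open>Sequences over the alphabet A_s = {0,...,s-1}, indexed from 0
  (index n corresponds to the paper's alpha_(n+1)).\<close>
definition seqs :: "nat \<Rightarrow> (nat \<Rightarrow> nat) set" where
  "seqs s = {a. \<forall>n. a n < s}"

definition encoding :: "nat \<Rightarrow> ((nat \<Rightarrow> nat) \<Rightarrow> real) \<Rightarrow> bool" where
  "encoding s g \<longleftrightarrow> g ` seqs s = {0..1}"

definition codes :: "nat \<Rightarrow> ((nat \<Rightarrow> nat) \<Rightarrow> real) \<Rightarrow> real \<Rightarrow> (nat \<Rightarrow> nat) set" where
  "codes s g x = {a \<in> seqs s. g a = x}"

definition binary_point :: "nat \<Rightarrow> ((nat \<Rightarrow> nat) \<Rightarrow> real) \<Rightarrow> real \<Rightarrow> bool" where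
  "binary_point s g x \<longleftrightarrow> finite (codes s g x) \<and> card (codes s g x) = 2"

definition zero_redundancy :: "nat \<Rightarrow> ((nat \<Rightarrow> nat) \<Rightarrow> real) \<Rightarrow> bool" where
  "zero_redundancy s g \<longleftrightarrow>
     (\<forall>x. finite (codes s g x) \<and> card (codes s g x) \<le> 2) \<and>
     countable {x. binary_point s g x}"

definition prepend :: "nat list \<Rightarrow> (nat \<Rightarrow> nat) \<Rightarrow> (nat \<Rightarrow> nat)" where
  "prepend cs a = (\<lambda>n. if n < length cs then cs ! n else a (n - length cs))"

definition cylinder :: "nat \<Rightarrow> ((nat \<Rightarrow> nat) \<Rightarrow> real) \<Rightarrow> nat list \<Rightarrow> real set" where
  "cylinder s g cs = (\<lambda>a. g (prepend cs a)) ` seqs s"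

definition continuous_encoding :: "nat \<Rightarrow> ((nat \<Rightarrow> nat) \<Rightarrow> real) \<Rightarrow> bool" where
  "continuous_encoding s g \<longleftrightarrow>
     (\<forall>cs. set cs \<subseteq> {..<s} \<longrightarrow> is_interval (cylinder s g cs)) \<and>
     (\<forall>cs ds. set cs \<subseteq> {..<s} \<longrightarrow> set ds \<subseteq> {..<s} \<longrightarrow> length cs = length ds \<longrightarrow>
        cs \<noteq> ds \<longrightarrow> interior (cylinder s g cs) \<inter> interior (cylinder s g ds) = {})"

text \<open>The digit transformation: beta_n = phi_n(alpha_1,...,alpha_n);
  with 0-based indexing beta at index k is phi (k+1) applied to the first k+1 digits.\<close>
definition transform :: "(nat \<Rightarrow> nat list \<Rightarrow> nat) \<Rightarrow> (nat \<Rightarrow> nat) \<Rightarrow> (nat \<Rightarrow> nat)" where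
  "transform \<phi> a = (\<lambda>k. \<phi> (Suc k) (map a [0..<Suc k]))"

definition psi :: "nat \<Rightarrow> ((nat \<Rightarrow> nat) \<Rightarrow> real) \<Rightarrow> ((nat \<Rightarrow> nat) \<Rightarrow> real)
                   \<Rightarrow> (nat \<Rightarrow> nat list \<Rightarrow> nat) \<Rightarrow> real \<Rightarrow> real" where
  "psi s g1 g2 \<phi> x = g2 (transform \<phi> (SOME a. a \<in> codes s g1 x))"

definition well_defined_at :: "nat \<Rightarrow> ((nat \<Rightarrow> nat) \<Rightarrow> real) \<Rightarrow> ((nat \<Rightarrow> nat) \<Rightarrow> real)
                   \<Rightarrow> (nat \<Rightarrow> nat list \<Rightarrow> nat) \<Rightarrow> real \<Rightarrow> bool" where
  "well_defined_at s g1 g2 \<phi> x \<longleftrightarrow>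
     (\<forall>a\<in>codes s g1 x. \<forall>b\<in>codes s g1 x. g2 (transform \<phi> a) = g2 (transform \<phi> b))"

end

(*
  The code space L_s is compact, and a continuous encoding g with zero redundancy is continuous
  on it: the cylinder of a long prefix of a code of x is an interval containing x, and it misses
  any prescribed y <> x eventually, because y has only finitely many codes.  The digit map
  (alpha_n) |-> (beta_n) is continuous as each beta_n depends on finitely many alpha_i.
  A continuous map from a compact space onto [0,1] is a quotient map, so once psi is well
  defined, psi o g1 = g2 o (digit map) forces psi to be continuous.  Well-definedness is
  automatic at g1-unary points and points outside [0,1] have no codes at all, which gives
  both directions.
*)
theory Submission
  imports Defs
begin

lemma compact_seqs: "compact (seqs s)"
proof -
  have "seqs s = PiE UNIV (\<lambda>_. {..<s})"
    by (auto simp: seqs_def PiE_def)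
  moreover have "compactin (product_topology (\<lambda>_. euclidean) UNIV) (PiE (UNIV::nat set) (\<lambda>_. {..<s}))"
    by (subst compactin_PiE) (auto intro: finite_imp_compact)
  ultimately show ?thesis
    by (simp add: euclidean_product_topology)
qed

lemma open_prefix_agree: "open {b :: nat \<Rightarrow> 'a::discrete_topology. \<forall>i<N. b i = a i}"
  using product_topology_basis'[of "{..<N}" "\<lambda>i. {a i}" id] by (simp add: open_discrete Ball_def)

lemma continuous_on_prefix_criterion:
  fixes F :: "(nat \<Rightarrow> 'a::discrete_topology) \<Rightarrow> 'b::topological_space"
  assumes "\<And>a B. a \<in> K \<Longrightarrow> open B \<Longrightarrow> F a \<in> B \<Longrightarrow> \<exists>N. \<forall>b\<in>K. (\<forall>i<N. b i = a i) \<longrightarrow> F b \<in> B"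
  shows "continuous_on K F"
  unfolding continuous_on_topological
proof (intro ballI allI impI)
  fix a B assume "a \<in> K" "open B" "F a \<in> B"
  then obtain N where "\<forall>b\<in>K. (\<forall>i<N. b i = a i) \<longrightarrow> F b \<in> B"
    using assms by blast
  then show "\<exists>A. open A \<and> a \<in> A \<and> (\<forall>b\<in>K. b \<in> A \<longrightarrow> F b \<in> B)"
    using open_prefix_agree[of N a] by blast
qed

lemma continuous_on_if_prefix_determined:
  fixes F :: "(nat \<Rightarrow> 'a::discrete_topology) \<Rightarrow> 'b::topological_space"
  assumes "\<And>a b. \<forall>i<N. b i = a i \<Longrightarrow> F b = F a"
  shows "continuous_on K F"
  using assms by (intro continuous_on_prefix_criterion) metis

lemma prepend_prefix: "\<forall>i<N. b i = a i \<Longrightarrow> prepend (map a [0..<N]) (\<lambda>n. b (n + N)) = b"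
  by (auto simp: prepend_def fun_eq_iff)

lemma prepend_in_seqs: "set cs \<subseteq> {..<s} \<Longrightarrow> t \<in> seqs s \<Longrightarrow> prepend cs t \<in> seqs s"
  by (auto simp: prepend_def seqs_def) (meson lessThan_iff nth_mem subsetD)

lemma cylinder_prefix_eq:
  assumes "a \<in> seqs s"
  shows "cylinder s g (map a [0..<N]) = g ` {b \<in> seqs s. \<forall>i<N. b i = a i}"
proof
  show "cylinder s g (map a [0..<N]) \<subseteq> g ` {b \<in> seqs s. \<forall>i<N. b i = a i}"
  proof
    fix y assume "y \<in> cylinder s g (map a [0..<N])"
    then obtain t where t: "t \<in> seqs s" "y = g (prepend (map a [0..<N]) t)"
      by (auto simp: cylinder_def)
    have "set (map a [0..<N]) \<subseteq> {..<s}"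
      using assms by (auto simp: seqs_def)
    then have "prepend (map a [0..<N]) t \<in> seqs s"
      using t(1) by (rule prepend_in_seqs)
    moreover have "\<forall>i<N. prepend (map a [0..<N]) t i = a i"
      by (simp add: prepend_def)
    ultimately show "y \<in> g ` {b \<in> seqs s. \<forall>i<N. b i = a i}"
      using t(2) by blast
  qed
  show "g ` {b \<in> seqs s. \<forall>i<N. b i = a i} \<subseteq> cylinder s g (map a [0..<N])"
  proof clarify
    fix b assume "b \<in> seqs s" "\<forall>i<N. b i = a i"
    moreover have "(\<lambda>n. b (n + N)) \<in> seqs s"
      using \<open>b \<in> seqs s\<close> by (auto simp: seqs_def)
    ultimately show "g b \<in> cylinder s g (map a [0..<N])"
      unfolding cylinder_def by (metis (no_types, lifting) image_eqI prepend_prefix)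
  qed
qed

text \<open>Take N beyond the first position where each of the finitely many codes of y leaves a.\<close>
lemma prefix_agreement_avoids_value:
  assumes fin: "finite (codes s g y)" and "g a \<noteq> y"
  shows "\<exists>N. \<forall>b\<in>seqs s. (\<forall>i<N. b i = a i) \<longrightarrow> g b \<noteq> y"
proof -
  define first_diff where "first_diff c = (LEAST i. c i \<noteq> a i)" for c :: "nat \<Rightarrow> nat"
  define N where "N = Suc (Max (insert 0 (first_diff ` codes s g y)))"
  have "g b \<noteq> y" if "b \<in> seqs s" "\<forall>i<N. b i = a i" for b
  proof
    assume "g b = y"
    then have "b \<in> codes s g y" "b \<noteq> a"
      using that(1) \<open>g a \<noteq> y\<close> by (auto simp: codes_def)
    then obtain i where "b i \<noteq> a i"
      by (auto simp: fun_eq_iff)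
    then have "b (first_diff b) \<noteq> a (first_diff b)"
      unfolding first_diff_def by (rule LeastI)
    moreover have "first_diff b \<le> Max (insert 0 (first_diff ` codes s g y))"
      using fin \<open>b \<in> codes s g y\<close> by (intro Max_ge) auto
    then have "first_diff b < N"
      by (simp add: N_def)
    ultimately show False
      using that(2) by blast
  qed
  then show ?thesis
    by blast
qed

lemma is_interval_subset_ball:
  fixes C :: "real set"
  assumes "is_interval C" "x \<in> C" "x + e \<notin> C" "x - e \<notin> C" "e > 0"
  shows "C \<subseteq> ball x e"
proof
  fix y assume "y \<in> C"
  have "y < x + e"
  proof (rule ccontr)
    assume "\<not> y < x + e"
    then show False
      using mem_is_interval_1_I[OF assms(1,2) \<open>y \<in> C\<close>, of "x + e"] assms(3,5) by simp
  qed
  moreover have "x - e < y"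
  proof (rule ccontr)
    assume "\<not> x - e < y"
    then show False
      using mem_is_interval_1_I[OF assms(1) \<open>y \<in> C\<close> assms(2), of "x - e"] assms(4,5) by simp
  qed
  ultimately show "y \<in> ball x e"
    by (auto simp: dist_real_def)
qed

lemma continuous_on_seqs_encoding:
  assumes fin: "\<And>y. finite (codes s g y)"
    and interval: "\<And>cs. set cs \<subseteq> {..<s} \<Longrightarrow> is_interval (cylinder s g cs)"
  shows "continuous_on (seqs s) g"
proof (rule continuous_on_prefix_criterion)
  fix a B assume a: "a \<in> seqs s" and "open B" "g a \<in> B"
  then obtain e where e: "e > 0" "ball (g a) e \<subseteq> B"
    by (meson openE)
  obtain N1 where N1: "\<forall>b\<in>seqs s. (\<forall>i<N1. b i = a i) \<longrightarrow> g b \<noteq> g a + e"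
    using prefix_agreement_avoids_value[OF fin, where y = "g a + e" and a = a] e by auto
  obtain N2 where N2: "\<forall>b\<in>seqs s. (\<forall>i<N2. b i = a i) \<longrightarrow> g b \<noteq> g a - e"
    using prefix_agreement_avoids_value[OF fin, where y = "g a - e" and a = a] e by auto
  define N where "N = max N1 N2"
  define C where "C = cylinder s g (map a [0..<N])"
  have C: "C = g ` {b \<in> seqs s. \<forall>i<N. b i = a i}"
    unfolding C_def using a by (rule cylinder_prefix_eq)
  have "is_interval C"
    unfolding C_def using a by (intro interval) (auto simp: seqs_def)
  moreover have "g a \<in> C" "g a + e \<notin> C" "g a - e \<notin> C"
    using a N1 N2 by (auto simp: C N_def)
  ultimately have "C \<subseteq> ball (g a) e"
    using e(1) by (rule is_interval_subset_ball)
  then show "\<exists>N. \<forall>b\<in>seqs s. (\<forall>i<N. b i = a i) \<longrightarrow> g b \<in> B"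
    using e(2) by (auto simp: C)
qed

corollary continuous_on_seqs_continuous_encoding:
  assumes "zero_redundancy s g" "continuous_encoding s g"
  shows "continuous_on (seqs s) g"
proof (rule continuous_on_seqs_encoding)
  show "finite (codes s g y)" for y
    using assms(1) by (simp add: zero_redundancy_def)
  show "is_interval (cylinder s g cs)" if "set cs \<subseteq> {..<s}" for cs
    using assms(2) that by (simp add: continuous_encoding_def)
qed

lemma transform_in_seqs:
  assumes "\<And>n cs. n \<ge> 1 \<Longrightarrow> length cs = n \<Longrightarrow> set cs \<subseteq> {..<s} \<Longrightarrow> \<phi> n cs < r"
    and "a \<in> seqs s"
  shows "transform \<phi> a \<in> seqs r"
  using assms unfolding transform_def seqs_def by (auto intro!: assms(1))

lemma continuous_on_transform: "continuous_on K (transform \<phi>)"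
proof (intro continuous_on_coordinatewise_then_product)
  fix k
  show "continuous_on K (\<lambda>a. transform \<phi> a k)"
  proof (rule continuous_on_if_prefix_determined[where N = "Suc k"])
    fix a b :: "nat \<Rightarrow> nat" assume "\<forall>i<Suc k. b i = a i"
    then have "map b [0..<Suc k] = map a [0..<Suc k]"
      by (intro map_cong) auto
    then show "transform \<phi> b k = transform \<phi> a k"
      by (simp only: transform_def)
  qed
qed

text \<open>q is a closed map on the compact K, so the f-preimage of a closed set, being the q-image of
  a closed subset of K, is closed.\<close>
lemma continuous_on_factor_through_compact:
  fixes q :: "'a::topological_space \<Rightarrow> 'b::t2_space" and h :: "'a \<Rightarrow> 'c::topological_space"
  assumes "compact K" "continuous_on K q" "continuous_on K h"
    and factor: "\<And>a. a \<in> K \<Longrightarrow> f (q a) = h a"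
  shows "continuous_on (q ` K) f"
  unfolding continuous_on_closed_invariant
proof (intro allI impI)
  fix B :: "'c set" assume "closed B"
  have "closedin (top_of_set K) (K \<inter> h -` B)"
    using \<open>continuous_on K h\<close> \<open>closed B\<close> by (rule continuous_closedin_preimage)
  then have "compact (K \<inter> h -` B)"
    by (rule closedin_compact[OF \<open>compact K\<close>])
  moreover have "continuous_on (K \<inter> h -` B) q"
    using \<open>continuous_on K q\<close> by (rule continuous_on_subset) blast
  ultimately have "closed (q ` (K \<inter> h -` B))"
    by (intro compact_imp_closed compact_continuous_image)
  moreover have "q ` (K \<inter> h -` B) \<inter> q ` K = f -` B \<inter> q ` K"
    using factor by auto
  ultimately show "\<exists>A. closed A \<and> A \<inter> q ` K = f -` B \<inter> q ` K"
    by blast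
qed

lemma well_defined_at_if_not_binary:
  assumes "zero_redundancy s g1" and "\<not> binary_point s g1 x"
  shows "well_defined_at s g1 g2 \<phi> x"
proof -
  have "finite (codes s g1 x)" "card (codes s g1 x) \<le> 2"
    using assms(1) by (auto simp: zero_redundancy_def)
  then have "card (codes s g1 x) \<le> 1"
    using assms(2) by (auto simp: binary_point_def)
  then have "\<forall>a\<in>codes s g1 x. \<forall>b\<in>codes s g1 x. a = b"
    using card_le_Suc0_iff_eq[OF \<open>finite (codes s g1 x)\<close>] by simp
  then show ?thesis
    by (auto simp: well_defined_at_def)
qed

lemma well_defined_at_outside_unit_interval:
  "encoding s g1 \<Longrightarrow> x \<notin> {0..1} \<Longrightarrow> well_defined_at s g1 g2 \<phi> x"
  by (auto simp: encoding_def well_defined_at_def codes_def)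

lemma psi_eq_at_code:
  assumes "well_defined_at s g1 g2 \<phi> x" and "a \<in> codes s g1 x"
  shows "psi s g1 g2 \<phi> x = g2 (transform \<phi> a)"
proof -
  have "(SOME a. a \<in> codes s g1 x) \<in> codes s g1 x"
    using assms(2) by (rule someI[where P = "\<lambda>a. a \<in> codes s g1 x"])
  then show ?thesis
    using assms unfolding psi_def well_defined_at_def by blast
qed

theorem theorem1:
  fixes s r :: nat
    and g1 g2 :: "(nat \<Rightarrow> nat) \<Rightarrow> real"
    and \<phi> :: "nat \<Rightarrow> nat list \<Rightarrow> nat"
  assumes "s \<ge> 2" and "r \<ge> 2"
    and "encoding s g1" and "zero_redundancy s g1" and "continuous_encoding s g1"
    and "encoding r g2" and "zero_redundancy r g2" and "continuous_encoding r g2"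
    and "\<And>n cs. n \<ge> 1 \<Longrightarrow> length cs = n \<Longrightarrow> set cs \<subseteq> {..<s} \<Longrightarrow> \<phi> n cs < r"
  shows "((\<forall>x\<in>{0..1}. well_defined_at s g1 g2 \<phi> x) \<and> continuous_on {0..1} (psi s g1 g2 \<phi>))
         \<longleftrightarrow> (\<forall>x. binary_point s g1 x \<longrightarrow> well_defined_at s g1 g2 \<phi> x)"
proof
  assume "(\<forall>x\<in>{0..1}. well_defined_at s g1 g2 \<phi> x) \<and> continuous_on {0..1} (psi s g1 g2 \<phi>)"
  then show "\<forall>x. binary_point s g1 x \<longrightarrow> well_defined_at s g1 g2 \<phi> x"
    using well_defined_at_outside_unit_interval[OF \<open>encoding s g1\<close>] by blast
next
  assume "\<forall>x. binary_point s g1 x \<longrightarrow> well_defined_at s g1 g2 \<phi> x"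
  then have wd: "well_defined_at s g1 g2 \<phi> x" for x
    using well_defined_at_if_not_binary[OF \<open>zero_redundancy s g1\<close>] by blast
  have g1: "continuous_on (seqs s) g1"
    using assms(4,5) by (rule continuous_on_seqs_continuous_encoding)
  have g2: "continuous_on (seqs r) g2"
    using assms(7,8) by (rule continuous_on_seqs_continuous_encoding)
  have "continuous_on (seqs s) (g2 \<circ> transform \<phi>)"
    using continuous_on_transform g2 transform_in_seqs[OF assms(9)]
    by (intro continuous_on_compose) (auto intro: continuous_on_subset)
  moreover have "psi s g1 g2 \<phi> (g1 a) = (g2 \<circ> transform \<phi>) a" if "a \<in> seqs s" for a
    using psi_eq_at_code[OF wd] that by (simp add: codes_def)
  ultimately have "continuous_on (g1 ` seqs s) (psi s g1 g2 \<phi>)"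
    by (rule continuous_on_factor_through_compact[OF compact_seqs g1])
  then show "(\<forall>x\<in>{0..1}. well_defined_at s g1 g2 \<phi> x) \<and> continuous_on {0..1} (psi s g1 g2 \<phi>)"
    using wd \<open>encoding s g1\<close> by (simp add: encoding_def)
qed

end
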